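(* Assume $\Phi$ is deterministic with $\lambda_{\min}(G)>0$, $|c_i|=\hat c>0$ for all $i\in[m]$, and that $\sigma$ is Lipschitz, differentiable everywhere, and satisfies $|\sigma'(u)|\ge K_{\sigma'}>0$ for all $u\in\mathbb R$. Then every gradient-flow solution $(W^t)_{t\ge0}$ satisfies, for all $t\ge0$, $$\mathcal L^t\ \le\ \mathcal L^0\,e^{-2\hat c^2\lambda_{\min}(G)K_{\sigma'}^2\,t}.$$
   Context: Setup: training inputs $x_1,\dots,x_n\in\Omega\subseteq\mathbb R^d$ and targets $y\in\mathbb R^n$. An embedding $\Phi=(\phi_1,\dots,\phi_D):\Omega\to\mathbb R^D$. Activation $\sigma:\mathbb R\to\mathbb R$. Parameters $c\in\mathbb R^m$ (fixed, not trained) and $W\in\mathbb R^{m\times D}$. The model is $f(x)=\frac1m\sum_{i=1}^m c_i\,\sigma(h_i(x))$ with $h_i(x)=\frac{1}{\sqrt D}\sum_{j=1}^D W_{ij}\phi_j(x)$, and the loss is $\mathcal L=\frac12\sum_{a=1}^n (f(x_a)-y_a)^2$. Gram matrix $G_{ab}=\frac1D\Phi(x_a)^\top\Phi(x_b)$ with least eigenvalue $\lambda_{\min}(G)$. A gradient-flow solution is a map $t\mapsto W^t$, $t\ge0$, absolutely continuous on bounded intervals, such that for a.e. $t$ and all $i,j$: $\dot W^t_{ij}=-\frac{c_i}{\sqrt D}\sum_{a=1}^n (f^t(x_a)-y_a)\,\sigma'(h_i^t(x_a))\,\phi_j(x_a)$, where $h_i^t,f^t$ are computed from $W^t$ and $\mathcal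 L^t$ is the loss at time $t$. *)

theory Defs
  imports "HOL-Analysis.Analysis"
begin

text \<open>Index types: 'n training points, 'm neurons, 'D embedding features, 'd input dimension.\<close>

definition nn_h :: "('x \<Rightarrow> real^'D) \<Rightarrow> real^'D^'m \<Rightarrow> 'm \<Rightarrow> 'x \<Rightarrow> real" where
  "nn_h Phi W i x = (1 / sqrt (real CARD('D))) * (\<Sum>j\<in>UNIV. W$i$j * Phi x $ j)"

definition nn_f :: "(real \<Rightarrow> real) \<Rightarrow> ('x \<Rightarrow> real^'D) \<Rightarrow> real^'m \<Rightarrow> real^'D^'m \<Rightarrow> 'x \<Rightarrow> real" where
  "nn_f \<sigma> Phi c W x = (1 / real CARD('m)) * (\<Sum>i\<in>UNIV. c$i * \<sigma> (nn_h Phi W i x))"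

definition nn_loss :: "(real \<Rightarrow> real) \<Rightarrow> ('x \<Rightarrow> real^'D) \<Rightarrow> real^'m \<Rightarrow> ('n \<Rightarrow> 'x) \<Rightarrow> real^'n
    \<Rightarrow> real^'D^'m \<Rightarrow> real" where
  "nn_loss \<sigma> Phi c xs y W = (1/2) * (\<Sum>a\<in>UNIV. (nn_f \<sigma> Phi c W (xs a) - y$a)^2)"

definition gram :: "('x \<Rightarrow> real^'D) \<Rightarrow> ('n \<Rightarrow> 'x) \<Rightarrow> real^'n^'n" where
  "gram Phi xs = (\<chi> a b. (1 / real CARD('D)) * (Phi (xs a) \<bullet> Phi (xs b)))"

definition is_eigenvalue :: "real^'n^'n \<Rightarrow> real \<Rightarrow> bool" where
  "is_eigenvalue A \<mu> \<longleftrightarrow> (\<exists>v. v \<noteq> 0 \<and> A *v v = \<mu> *\<^sub>R v)"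

definition lambda_min :: "real^'n^'n \<Rightarrow> real" where
  "lambda_min A = Min {\<mu>. is_eigenvalue A \<mu>}"

definition abs_cont_on :: "real \<Rightarrow> real \<Rightarrow> (real \<Rightarrow> 'a::real_normed_vector) \<Rightarrow> bool" where
  "abs_cont_on s e f \<longleftrightarrow>
     (\<forall>\<epsilon>>0. \<exists>\<delta>>0. \<forall>(N::nat) (l::nat \<Rightarrow> real) (r::nat \<Rightarrow> real).
        (\<forall>k<N. s \<le> l k \<and> l k \<le> r k \<and> r k \<le> e) \<and>
        (\<forall>k<N. \<forall>k'<N. k \<noteq> k' \<longrightarrow> r k \<le> l k' \<or> r k' \<le> l k) \<and>
        (\<Sum>k<N. r k - l k) < \<delta>
        \<longrightarrow> (\<Sum>k<N. norm (f (r k) - f (l k))) < \<epsilon>)"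

definition gf_rhs :: "(real \<Rightarrow> real) \<Rightarrow> ('x \<Rightarrow> real^'D) \<Rightarrow> real^'m \<Rightarrow> ('n \<Rightarrow> 'x) \<Rightarrow> real^'n
    \<Rightarrow> real^'D^'m \<Rightarrow> real^'D^'m" where
  "gf_rhs \<sigma> Phi c xs y W = (\<chi> i j. - (c$i / sqrt (real CARD('D))) *
      (\<Sum>a\<in>UNIV. (nn_f \<sigma> Phi c W (xs a) - y$a) * deriv \<sigma> (nn_h Phi W i (xs a)) * Phi (xs a) $ j))"

definition gradient_flow_solution :: "(real \<Rightarrow> real) \<Rightarrow> ('x \<Rightarrow> real^'D) \<Rightarrow> real^'m \<Rightarrow> ('n \<Rightarrow> 'x)
    \<Rightarrow> real^'n \<Rightarrow> (real \<Rightarrow> real^'D^'m) \<Rightarrow> bool" where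
  "gradient_flow_solution \<sigma> Phi c xs y W \<longleftrightarrow>
     (\<forall>T\<ge>0. abs_cont_on 0 T W) \<and>
     (AE t in lborel. t \<ge> 0 \<longrightarrow> (W has_vector_derivative gf_rhs \<sigma> Phi c xs y (W t)) (at t))"

end

theory Submission
  imports Defs
begin

(*
  Along the flow the loss satisfies dL/dt = -(1/m) * sum_i c_i^2 * v_i' G v_i, where v_i is the
  vector of residuals f(x_a) - y_a weighted by the slopes sigma'(h_i(x_a)).  Since
  v_i' G v_i >= lambda_min(G) |v_i|^2 >= lambda_min(G) K^2 |f - y|^2 = 2 lambda_min(G) K^2 L,
  the function L(t) exp(kappa t), kappa = 2 chat^2 lambda_min(G) K^2, has an almost everywhere
  nonpositive derivative.  It is absolutely continuous because sigma is Lipschitz and the flow is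
  absolutely continuous, and an absolutely continuous function with almost everywhere nonpositive
  derivative is nonincreasing.  The latter is shown by a gauge argument: on tags outside the
  exceptional null set the derivative controls the increments, while the intervals tagged in the
  null set have small total length, so absolute continuity controls them.
*)

section \<open>Absolute continuity\<close>

definition nonoverlapping_subintervals ::
    "real \<Rightarrow> real \<Rightarrow> nat \<Rightarrow> (nat \<Rightarrow> real) \<Rightarrow> (nat \<Rightarrow> real) \<Rightarrow> bool" where
  "nonoverlapping_subintervals a b N l r \<longleftrightarrow>
     (\<forall>k<N. a \<le> l k \<and> l k \<le> r k \<and> r k \<le> b) \<and>
     (\<forall>k<N. \<forall>k'<N. k \<noteq> k' \<longrightarrow> r k \<le> l k' \<or> r k' \<le> l k)"

lemma abs_cont_on_iff:
  "abs_cont_on a b f \<longleftrightarrow> (\<forall>e>0. \<exists>\<delta>>0. \<forall>N l r. nonoverlapping_subintervals a b N l r \<longrightarrow>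
      (\<Sum>k<N. r k - l k) < \<delta> \<longrightarrow> (\<Sum>k<N. norm (f (r k) - f (l k))) < e)"
  unfolding abs_cont_on_def nonoverlapping_subintervals_def by (simp add: imp_conjL)

lemma abs_cont_onI:
  assumes "\<And>e. e > 0 \<Longrightarrow> \<exists>\<delta>>0. \<forall>N l r. nonoverlapping_subintervals a b N l r \<longrightarrow>
      (\<Sum>k<N. r k - l k) < \<delta> \<longrightarrow> (\<Sum>k<N. norm (f (r k) - f (l k))) < e"
  shows "abs_cont_on a b f"
  using assms unfolding abs_cont_on_iff by blast

lemma abs_cont_onE:
  assumes "abs_cont_on a b f" "e > 0"
  obtains \<delta> where "\<delta> > 0" "\<And>N l r. nonoverlapping_subintervals a b N l r \<Longrightarrow>
      (\<Sum>k<N. r k - l k) < \<delta> \<Longrightarrow> (\<Sum>k<N. norm (f (r k) - f (l k))) < e"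
  using assms unfolding abs_cont_on_iff by blast

lemma abs_cont_on_compose_lipschitz:
  fixes f :: "real \<Rightarrow> 'a::real_normed_vector" and \<phi> :: "'a \<Rightarrow> 'b::real_normed_vector"
  assumes f: "abs_cont_on a b f" and \<phi>: "M-lipschitz_on (f ` {a..b}) \<phi>"
  shows "abs_cont_on a b (\<lambda>t. \<phi> (f t))"
proof (rule abs_cont_onI)
  fix e :: real assume "e > 0"
  have M: "M \<ge> 0" using \<phi> by (rule lipschitz_on_nonneg)
  obtain \<delta> where "\<delta> > 0" and \<delta>: "\<And>N l r. nonoverlapping_subintervals a b N l r \<Longrightarrow>
      (\<Sum>k<N. r k - l k) < \<delta> \<Longrightarrow> (\<Sum>k<N. norm (f (r k) - f (l k))) < e / (M + 1)"
    using abs_cont_onE[OF f] \<open>e > 0\<close> M by (metis add_nonneg_pos divide_pos_pos zero_less_one)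
  have "(\<Sum>k<N. norm (\<phi> (f (r k)) - \<phi> (f (l k)))) < e"
    if I: "nonoverlapping_subintervals a b N l r" "(\<Sum>k<N. r k - l k) < \<delta>" for N l r
  proof -
    have "(\<Sum>k<N. norm (\<phi> (f (r k)) - \<phi> (f (l k)))) \<le> (\<Sum>k<N. M * norm (f (r k) - f (l k)))"
      using I(1) by (intro sum_mono lipschitz_on_normD[OF \<phi>])
        (auto simp: nonoverlapping_subintervals_def)
    also have "\<dots> \<le> (M + 1) * (\<Sum>k<N. norm (f (r k) - f (l k)))"
      by (simp add: sum_distrib_left[symmetric] mult_right_mono sum_nonneg)
    also have "\<dots> < (M + 1) * (e / (M + 1))"
      using \<delta>[OF I] M by (intro mult_strict_left_mono) auto
    finally show ?thesis using M by simp
  qed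
  then show "\<exists>\<delta>>0. \<forall>N l r. nonoverlapping_subintervals a b N l r \<longrightarrow>
      (\<Sum>k<N. r k - l k) < \<delta> \<longrightarrow> (\<Sum>k<N. norm (\<phi> (f (r k)) - \<phi> (f (l k)))) < e"
    using \<open>\<delta> > 0\<close> by blast
qed

lemma abs_cont_on_ident: "abs_cont_on a b (\<lambda>t. t)"
proof (rule abs_cont_onI)
  fix e :: real assume "e > 0"
  have "(\<Sum>k<N. norm (r k - l k)) = (\<Sum>k<N. r k - l k)"
    if "nonoverlapping_subintervals a b N l r" for N l r
    using that by (intro sum.cong) (auto simp: nonoverlapping_subintervals_def)
  then show "\<exists>\<delta>>0. \<forall>N l r. nonoverlapping_subintervals a b N l r \<longrightarrow>
      (\<Sum>k<N. r k - l k) < \<delta> \<longrightarrow> (\<Sum>k<N. norm (r k - l k)) < e"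
    using \<open>e > 0\<close> by auto
qed

lemma abs_cont_on_const: "abs_cont_on a b (\<lambda>t. c)"
  unfolding abs_cont_on_def by auto

lemma abs_cont_on_add:
  fixes f g :: "real \<Rightarrow> 'a::real_normed_vector"
  assumes f: "abs_cont_on a b f" and g: "abs_cont_on a b g"
  shows "abs_cont_on a b (\<lambda>t. f t + g t)"
proof (rule abs_cont_onI)
  fix e :: real assume "e > 0"
  obtain \<delta>1 where "\<delta>1 > 0" and \<delta>1: "\<And>N l r. nonoverlapping_subintervals a b N l r \<Longrightarrow>
      (\<Sum>k<N. r k - l k) < \<delta>1 \<Longrightarrow> (\<Sum>k<N. norm (f (r k) - f (l k))) < e / 2"
    using abs_cont_onE[OF f, of "e / 2"] \<open>e > 0\<close> by auto
  obtain \<delta>2 where "\<delta>2 > 0" and \<delta>2: "\<And>N l r. nonoverlapping_subintervals a b N l r \<Longrightarrow>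
      (\<Sum>k<N. r k - l k) < \<delta>2 \<Longrightarrow> (\<Sum>k<N. norm (g (r k) - g (l k))) < e / 2"
    using abs_cont_onE[OF g, of "e / 2"] \<open>e > 0\<close> by auto
  have "(\<Sum>k<N. norm (f (r k) + g (r k) - (f (l k) + g (l k)))) < e"
    if I: "nonoverlapping_subintervals a b N l r" "(\<Sum>k<N. r k - l k) < min \<delta>1 \<delta>2" for N l r
  proof -
    have "(\<Sum>k<N. norm (f (r k) + g (r k) - (f (l k) + g (l k))))
        \<le> (\<Sum>k<N. norm (f (r k) - f (l k)) + norm (g (r k) - g (l k)))"
      by (intro sum_mono) (metis add_diff_add norm_triangle_ineq)
    also have "\<dots> < e"
      using \<delta>1[OF I(1)] \<delta>2[OF I(1)] I(2) by (simp add: sum.distrib)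
    finally show ?thesis .
  qed
  then show "\<exists>\<delta>>0. \<forall>N l r. nonoverlapping_subintervals a b N l r \<longrightarrow> (\<Sum>k<N. r k - l k) < \<delta> \<longrightarrow>
      (\<Sum>k<N. norm (f (r k) + g (r k) - (f (l k) + g (l k)))) < e"
    using \<open>\<delta>1 > 0\<close> \<open>\<delta>2 > 0\<close> by (intro exI[of _ "min \<delta>1 \<delta>2"]) auto
qed

lemma abs_cont_on_sum:
  fixes f :: "'i \<Rightarrow> real \<Rightarrow> 'a::real_normed_vector"
  assumes "\<And>i. i \<in> I \<Longrightarrow> abs_cont_on a b (f i)"
  shows "abs_cont_on a b (\<lambda>t. \<Sum>i\<in>I. f i t)"
  using assms
  by (induction I rule: infinite_finite_induct) (auto intro: abs_cont_on_const abs_cont_on_add)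

lemma abs_cont_on_cmult:
  fixes f :: "real \<Rightarrow> real"
  assumes "abs_cont_on a b f"
  shows "abs_cont_on a b (\<lambda>t. c * f t)"
  using abs_cont_on_compose_lipschitz[OF assms lipschitz_on_cmult_real[OF lipschitz_on_id]]
  by simp

lemma abs_cont_on_imp_continuous_on:
  assumes "abs_cont_on a b f"
  shows "continuous_on {a..b} f"
  unfolding continuous_on_iff
proof (intro ballI allI impI)
  fix x e :: real assume x: "x \<in> {a..b}" and "e > 0"
  obtain \<delta> where "\<delta> > 0" and \<delta>: "\<And>N l r. nonoverlapping_subintervals a b N l r \<Longrightarrow>
      (\<Sum>k<N. r k - l k) < \<delta> \<Longrightarrow> (\<Sum>k<N. norm (f (r k) - f (l k))) < e"
    using abs_cont_onE[OF assms \<open>e > 0\<close>] by blast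
  have "dist (f x') (f x) < e" if x': "x' \<in> {a..b}" "dist x' x < \<delta>" for x'
    using \<delta>[of 1 "\<lambda>_. min x x'" "\<lambda>_. max x x'"] x x'
    by (cases "x \<le> x'")
      (auto simp: nonoverlapping_subintervals_def dist_real_def dist_norm norm_minus_commute)
  then show "\<exists>\<delta>>0. \<forall>x'\<in>{a..b}. dist x' x < \<delta> \<longrightarrow> dist (f x') (f x) < e"
    using \<open>\<delta> > 0\<close> by blast
qed

lemma lipschitz_on_times_bounded:
  fixes S :: "(real \<times> real) set"
  assumes "B \<ge> 0" and "\<And>p. p \<in> S \<Longrightarrow> norm p \<le> B"
  shows "(2 * B)-lipschitz_on S (\<lambda>p. fst p * snd p)"
proof (rule lipschitz_onI)
  fix p q assume pq: "p \<in> S" "q \<in> S"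
  have "\<bar>fst p\<bar> \<le> B" "\<bar>snd q\<bar> \<le> B"
    using assms(2)[OF pq(1)] assms(2)[OF pq(2)]
      norm_fst_le[of "fst p" "snd p"] norm_snd_le[of "snd q" "fst q"] by auto
  moreover have "\<bar>fst p - fst q\<bar> \<le> dist p q" "\<bar>snd p - snd q\<bar> \<le> dist p q"
    using dist_fst_le[of p q] dist_snd_le[of p q] by (simp_all add: dist_real_def)
  ultimately have "\<bar>fst p\<bar> * \<bar>snd p - snd q\<bar> + \<bar>snd q\<bar> * \<bar>fst p - fst q\<bar> \<le> B * dist p q + B * dist p q"
    by (intro add_mono mult_mono) auto
  moreover have "\<bar>fst p * snd p - fst q * snd q\<bar> \<le> \<bar>fst p\<bar> * \<bar>snd p - snd q\<bar> + \<bar>snd q\<bar> * \<bar>fst p - fst q\<bar>"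
    unfolding abs_mult[symmetric] by (rule order_trans[OF _ abs_triangle_ineq]) (simp add: algebra_simps)
  ultimately show "dist (fst p * snd p) (fst q * snd q) \<le> 2 * B * dist p q"
    by (simp add: dist_real_def)
qed (use assms(1) in simp)

lemma abs_cont_on_mult:
  fixes f g :: "real \<Rightarrow> real"
  assumes f: "abs_cont_on a b f" and g: "abs_cont_on a b g"
  shows "abs_cont_on a b (\<lambda>t. f t * g t)"
proof -
  define fg where "fg t = (f t, g t)" for t
  have "compact (fg ` {a..b})"
    using abs_cont_on_imp_continuous_on[OF f] abs_cont_on_imp_continuous_on[OF g]
    unfolding fg_def by (intro compact_continuous_image continuous_on_Pair) auto
  then obtain B where "B > 0" "\<forall>p\<in>fg ` {a..b}. norm p \<le> B"
    using compact_imp_bounded bounded_pos by blast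
  then have "(2 * B)-lipschitz_on (fg ` {a..b}) (\<lambda>p. fst p * snd p)"
    by (intro lipschitz_on_times_bounded) auto
  moreover have "abs_cont_on a b fg"
    using abs_cont_on_add[OF abs_cont_on_compose_lipschitz[OF f, of 1 "\<lambda>x. (x, 0::real)"]
        abs_cont_on_compose_lipschitz[OF g, of 1 "\<lambda>x. (0::real, x)"]]
    unfolding fg_def by (simp add: lipschitz_on_def dist_Pair_Pair)
  ultimately show ?thesis
    using abs_cont_on_compose_lipschitz unfolding fg_def by fastforce
qed

lemma lipschitz_on_exp_atMost: "(exp B)-lipschitz_on {..B} exp"
proof (rule lipschitz_onI)
  have le: "exp y - exp x \<le> exp B * (y - x)" if "x \<le> y" "y \<le> B" for x y
  proof -
    have "exp y * (1 + (x - y)) \<le> exp y * exp (x - y)"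
      by (intro mult_left_mono exp_ge_add_one_self) auto
    then have "exp y - exp x \<le> exp y * (y - x)"
      by (simp add: exp_diff algebra_simps)
    also have "\<dots> \<le> exp B * (y - x)"
      using that by (intro mult_right_mono) auto
    finally show ?thesis .
  qed
  fix x y assume "x \<in> {..B}" "y \<in> {..B}"
  then show "dist (exp x) (exp y) \<le> exp B * dist x y"
    using le[of x y] le[of y x] by (cases "x \<le> y") (auto simp: dist_real_def)
qed simp

lemma abs_cont_on_exp_linear: "abs_cont_on a b (\<lambda>t. exp (c * t))"
proof (rule abs_cont_on_compose_lipschitz[OF abs_cont_on_cmult[OF abs_cont_on_ident]])
  have "c * t \<le> \<bar>c\<bar> * (\<bar>a\<bar> + \<bar>b\<bar>)" if "t \<in> {a..b}" for t
  proof -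
    have "c * t \<le> \<bar>c\<bar> * \<bar>t\<bar>" by (metis abs_ge_self abs_mult)
    also have "\<dots> \<le> \<bar>c\<bar> * (\<bar>a\<bar> + \<bar>b\<bar>)" using that by (intro mult_left_mono) auto
    finally show ?thesis .
  qed
  then show "(exp (\<bar>c\<bar> * (\<bar>a\<bar> + \<bar>b\<bar>)))-lipschitz_on ((\<lambda>t. c * t) ` {a..b}) exp"
    by (auto intro: lipschitz_on_subset[OF lipschitz_on_exp_atMost])
qed

section \<open>Monotonicity from an almost everywhere derivative bound\<close>

lemma interior_disjoint_intervals_ordered:
  fixes u v u' v' :: real
  assumes "interior {u..v} \<inter> interior {u'..v'} = {}" "u < v" "u' < v'"
  shows "v \<le> u' \<or> v' \<le> u"
  using assms by fastforce

lemma tagged_partial_division_of_real_interval: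
  fixes a b :: real
  assumes "p tagged_partial_division_of {a..b}" "(x, K) \<in> p"
  shows "K = {Inf K..Sup K}" "Inf K \<le> x" "x \<le> Sup K" "Inf K \<le> Sup K" "a \<le> Inf K" "Sup K \<le> b"
proof -
  obtain u v where K: "K = cbox u v" and "x \<in> K" "K \<subseteq> {a..b}"
    using tagged_partial_division_ofD(2-4)[OF assms] by blast
  then have "u \<le> v" "Inf K = u" "Sup K = v" by auto
  with K \<open>x \<in> K\<close> \<open>K \<subseteq> {a..b}\<close>
  show "K = {Inf K..Sup K}" "Inf K \<le> x" "x \<le> Sup K" "Inf K \<le> Sup K" "a \<le> Inf K" "Sup K \<le> b"
    by auto
qed

lemma tagged_partial_division_as_nonoverlapping_subintervals:
  fixes a b :: real
  assumes q: "q tagged_partial_division_of {a..b}"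
  obtains N l r where "nonoverlapping_subintervals a b N l r"
    "\<And>F :: real \<Rightarrow> real \<Rightarrow> real. (\<And>u. F u u = 0) \<Longrightarrow>
       (\<Sum>k<N. F (l k) (r k)) = (\<Sum>(x,K)\<in>q. F (Inf K) (Sup K))"
proof -
  note K = tagged_partial_division_of_real_interval[OF q]
  \<comment> \<open>degenerate intervals may repeat in q, so only the proper ones are enumerated\<close>
  define q' where "q' = {z\<in>q. Inf (snd z) < Sup (snd z)}"
  have "finite q'"
    using tagged_partial_division_ofD(1)[OF q] unfolding q'_def by (rule rev_finite_subset) auto
  then obtain h where h: "bij_betw h {..<card q'} q'"
    by (metis atLeast0LessThan ex_bij_betw_nat_finite)
  define l where "l k = Inf (snd (h k))" for k
  define r where "r k = Sup (snd (h k))" for k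
  have hq: "h k \<in> q" "Inf (snd (h k)) < Sup (snd (h k))" if "k < card q'" for k
    using bij_betwE[OF h] that unfolding q'_def by auto
  have "a \<le> l k \<and> l k \<le> r k \<and> r k \<le> b" if "k < card q'" for k
    using hq[OF that] K unfolding l_def r_def by (metis prod.collapse)
  moreover have "r k \<le> l k' \<or> r k' \<le> l k" if kk: "k < card q'" "k' < card q'" "k \<noteq> k'" for k k'
  proof -
    have "h k \<noteq> h k'" using h kk by (auto simp: bij_betw_def inj_on_def)
    then have "interior (snd (h k)) \<inter> interior (snd (h k')) = {}"
      using tagged_partial_division_ofD(5)[OF q] hq(1)[OF kk(1)] hq(1)[OF kk(2)]
      by (metis prod.collapse)
    then show ?thesis
      using K(1) hq kk interior_disjoint_intervals_ordered unfolding l_def r_def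
      by (metis prod.collapse)
  qed
  ultimately have "nonoverlapping_subintervals a b (card q') l r"
    unfolding nonoverlapping_subintervals_def by blast
  moreover have "(\<Sum>k<card q'. F (l k) (r k)) = (\<Sum>(x,K)\<in>q. F (Inf K) (Sup K))"
    if "\<And>u. F u u = 0" for F :: "real \<Rightarrow> real \<Rightarrow> real"
  proof -
    have "(\<Sum>k<card q'. F (l k) (r k)) = (\<Sum>(x,K)\<in>q'. F (Inf K) (Sup K))"
      using sum.reindex_bij_betw[OF h, of "\<lambda>(x,K). F (Inf K) (Sup K)"]
      unfolding l_def r_def by (simp add: case_prod_unfold)
    also have "\<dots> = (\<Sum>(x,K)\<in>q. F (Inf K) (Sup K))"
      using tagged_partial_division_ofD(1)[OF q] K(4) that
      by (intro sum.mono_neutral_left) (force simp: q'_def)+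
    finally show ?thesis .
  qed
  ultimately show ?thesis using that by blast
qed

lemma abs_cont_on_tagged_variation:
  fixes g :: "real \<Rightarrow> 'a::real_normed_vector"
  assumes "abs_cont_on a b g" "e > 0"
  obtains \<delta> where "\<delta> > 0" "\<And>q. q tagged_partial_division_of {a..b} \<Longrightarrow>
      (\<Sum>(x,K)\<in>q. Sup K - Inf K) < \<delta> \<Longrightarrow> (\<Sum>(x,K)\<in>q. norm (g (Sup K) - g (Inf K))) < e"
proof -
  obtain \<delta> where "\<delta> > 0" and \<delta>: "\<And>N l r. nonoverlapping_subintervals a b N l r \<Longrightarrow>
      (\<Sum>k<N. r k - l k) < \<delta> \<Longrightarrow> (\<Sum>k<N. norm (g (r k) - g (l k))) < e"
    using abs_cont_onE[OF assms] by blast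
  have "(\<Sum>(x,K)\<in>q. norm (g (Sup K) - g (Inf K))) < e"
    if q: "q tagged_partial_division_of {a..b}" "(\<Sum>(x,K)\<in>q. Sup K - Inf K) < \<delta>" for q
  proof -
    obtain N l r where lr: "nonoverlapping_subintervals a b N l r" and
      sums: "\<And>F :: real \<Rightarrow> real \<Rightarrow> real. (\<And>u. F u u = 0) \<Longrightarrow>
        (\<Sum>k<N. F (l k) (r k)) = (\<Sum>(x,K)\<in>q. F (Inf K) (Sup K))"
      using tagged_partial_division_as_nonoverlapping_subintervals[OF q(1)] by blast
    have "(\<Sum>k<N. r k - l k) < \<delta>"
      using sums[of "\<lambda>u v. v - u"] q(2) by simp
    then have "(\<Sum>k<N. norm (g (r k) - g (l k))) < e" by (rule \<delta>[OF lr])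
    then show ?thesis
      using sums[of "\<lambda>u v. norm (g v - g u)"] by simp
  qed
  with \<open>\<delta> > 0\<close> show ?thesis using that by blast
qed

lemma has_real_derivative_nonpos_straddle:
  assumes "(g has_real_derivative D) (at t)" "D \<le> 0" "e > 0"
  obtains r where "r > 0"
    "\<And>u v. u \<in> ball t r \<Longrightarrow> v \<in> ball t r \<Longrightarrow> u \<le> t \<Longrightarrow> t \<le> v \<Longrightarrow> g v - g u \<le> e * (v - u)"
proof -
  obtain r where "r > 0" and r: "\<And>y. norm (y - t) < r \<Longrightarrow> \<bar>g y - g t - D * (y - t)\<bar> \<le> e * \<bar>y - t\<bar>"
    using assms(1,3) unfolding has_field_derivative_def has_derivative_within_alt by force
  have "g v - g u \<le> e * (v - u)"
    if "u \<in> ball t r" "v \<in> ball t r" "u \<le> t" "t \<le> v" for u v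
  proof -
    have "g v - g t \<le> e * (v - t)" "g t - g u \<le> e * (t - u)"
      using r[of u] r[of v] that assms(2) mult_nonpos_nonneg[of D "v - t"] mult_nonpos_nonpos[of D "u - t"]
      by (auto simp: dist_real_def)
    then show ?thesis by (simp add: algebra_simps)
  qed
  with \<open>r > 0\<close> show ?thesis using that by blast
qed

lemma negligible_imp_tagged_length_small:
  fixes a b :: real
  assumes "negligible N" "\<delta> > 0"
  obtains \<gamma> where "gauge \<gamma>" "\<And>p. p tagged_division_of {a..b} \<Longrightarrow> \<gamma> fine p \<Longrightarrow>
      (\<Sum>(x,K)\<in>{z\<in>p. fst z \<in> N}. Sup K - Inf K) < \<delta>"
proof -
  have "(indicat_real N has_integral 0) (cbox a b)"
    using assms(1) by (simp add: negligible_def)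
  then obtain \<gamma> where "gauge \<gamma>" and \<gamma>: "\<And>p. p tagged_division_of cbox a b \<and> \<gamma> fine p \<Longrightarrow>
      norm ((\<Sum>(x,K)\<in>p. measure lborel K *\<^sub>R indicat_real N x) - 0) < \<delta>"
    using assms(2) unfolding has_integral by meson
  have length_eq: "(\<Sum>(x,K)\<in>{z\<in>p. fst z \<in> N}. Sup K - Inf K) =
      (\<Sum>(x,K)\<in>p. measure lborel K *\<^sub>R indicat_real N x)"
    if "p tagged_division_of {a..b}" for p
  proof -
    have p: "p tagged_partial_division_of {a..b}" "finite p"
      using that tagged_division_ofD(1)[OF that] by (auto simp: tagged_division_of_def)
    note K = tagged_partial_division_of_real_interval[OF p(1)]
    have "(\<Sum>(x,K)\<in>{z\<in>p. fst z \<in> N}. Sup K - Inf K) = (\<Sum>(x,K)\<in>p. if x \<in> N then Sup K - Inf K else 0)"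
      using p(2) by (simp add: sum.inter_filter case_prod_unfold)
    also have "\<dots> = (\<Sum>(x,K)\<in>p. measure lborel K *\<^sub>R indicat_real N x)"
      using K(1,4) by (intro sum.cong refl) (auto simp: indicator_def, metis content_real)
    finally show ?thesis .
  qed
  show ?thesis
  proof (rule that[OF \<open>gauge \<gamma>\<close>])
    fix p assume "p tagged_division_of {a..b}" "\<gamma> fine p"
    then show "(\<Sum>(x,K)\<in>{z\<in>p. fst z \<in> N}. Sup K - Inf K) < \<delta>"
      using \<gamma>[of p] length_eq[of p] by (simp add: box_real(2) abs_less_iff)
  qed
qed

lemma nonpos_derivative_straddle_gauge:
  assumes der: "\<And>t. t \<in> S \<Longrightarrow> \<exists>D. (g has_real_derivative D) (at t) \<and> D \<le> 0" and "e > 0"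
  obtains r where "\<And>t. r t > 0" "\<And>t u v. t \<in> S \<Longrightarrow> u \<in> ball t (r t) \<Longrightarrow> v \<in> ball t (r t) \<Longrightarrow>
      u \<le> t \<Longrightarrow> t \<le> v \<Longrightarrow> g v - g u \<le> e * (v - u)"
proof -
  have "\<exists>r>0. t \<in> S \<longrightarrow> (\<forall>u v. u \<in> ball t r \<longrightarrow> v \<in> ball t r \<longrightarrow> u \<le> t \<longrightarrow> t \<le> v \<longrightarrow>
      g v - g u \<le> e * (v - u))" for t
  proof (cases "t \<in> S")
    case True
    then obtain D where "(g has_real_derivative D) (at t)" "D \<le> 0" using der by blast
    then obtain r where "r > 0" "\<And>u v. u \<in> ball t r \<Longrightarrow> v \<in> ball t r \<Longrightarrow> u \<le> t \<Longrightarrow> t \<le> v \<Longrightarrow>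
        g v - g u \<le> e * (v - u)"
      using has_real_derivative_nonpos_straddle \<open>e > 0\<close> by blast
    then show ?thesis by (intro exI[of _ r]) simp
  next
    case False
    then show ?thesis by (intro exI[of _ 1] conjI impI) simp_all
  qed
  then obtain r where r_pos: "\<And>t. r t > 0" and r: "\<And>t. t \<in> S \<Longrightarrow> (\<forall>u v.
      u \<in> ball t (r t) \<longrightarrow> v \<in> ball t (r t) \<longrightarrow> u \<le> t \<longrightarrow> t \<le> v \<longrightarrow> g v - g u \<le> e * (v - u))"
    by (metis (lifting))
  show ?thesis by (rule that[OF r_pos]) (use r in blast)
qed

lemma tagged_division_increments_le:
  fixes g :: "real \<Rightarrow> real"
  assumes p: "p tagged_division_of {a..b}" "(\<lambda>t. ball t (r t)) fine p" and "a \<le> b" "e \<ge> 0"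
    and straddle: "\<And>t u v. t \<in> {a..b} - N \<Longrightarrow> u \<in> ball t (r t) \<Longrightarrow> v \<in> ball t (r t) \<Longrightarrow>
      u \<le> t \<Longrightarrow> t \<le> v \<Longrightarrow> g v - g u \<le> e * (v - u)"
  shows "(\<Sum>(x,K)\<in>{z\<in>p. fst z \<notin> N}. g (Sup K) - g (Inf K)) \<le> e * (b - a)"
proof -
  have "finite p" using p(1) by blast
  note K = tagged_partial_division_of_real_interval[OF tagged_division_of_def[THEN iffD1, OF p(1), THEN conjunct1]]
  have "(\<Sum>(x,K)\<in>{z\<in>p. fst z \<notin> N}. g (Sup K) - g (Inf K)) \<le>
      (\<Sum>(x,K)\<in>{z\<in>p. fst z \<notin> N}. e * (Sup K - Inf K))"
  proof (rule sum_mono)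
    fix z assume z: "z \<in> {z\<in>p. fst z \<notin> N}"
    obtain x K where [simp]: "z = (x, K)" by (cases z)
    have xK: "(x, K) \<in> p" and x: "x \<in> {a..b} - N" and "K \<subseteq> ball x (r x)"
      using z p tag_in_interval[OF p(1)] unfolding fine_def by auto
    moreover have "Inf K \<in> K" "Sup K \<in> K"
      using K(1,4)[OF xK] by (metis atLeastAtMost_iff order_refl)+
    ultimately have "Inf K \<in> ball x (r x)" "Sup K \<in> ball x (r x)" by auto
    then show "(case z of (x, K) \<Rightarrow> g (Sup K) - g (Inf K)) \<le> (case z of (x, K) \<Rightarrow> e * (Sup K - Inf K))"
      using straddle[OF x _ _ K(2,3)[OF xK]] by simp
  qed
  also have "\<dots> \<le> (\<Sum>(x,K)\<in>p. e * (Sup K - Inf K))"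
    using \<open>finite p\<close> K(4) \<open>e \<ge> 0\<close> by (intro sum_mono2) auto
  also have "\<dots> = e * (b - a)"
    using additive_tagged_division_1[OF \<open>a \<le> b\<close> p(1), of "\<lambda>x. x"]
    by (simp add: sum_distrib_left[symmetric] case_prod_unfold)
  finally show ?thesis .
qed

lemma abs_cont_on_derivative_nonpos_imp_le:
  fixes g :: "real \<Rightarrow> real"
  assumes ac: "abs_cont_on a b g" and "a \<le> b" and N: "negligible N"
    and der: "\<And>t. t \<in> {a..b} - N \<Longrightarrow> \<exists>D. (g has_real_derivative D) (at t) \<and> D \<le> 0"
  shows "g b \<le> g a"
proof -
  have key: "g b - g a \<le> e * (b - a) + e" if "e > 0" for e
  proof -
    obtain \<delta> where "\<delta> > 0" and \<delta>: "\<And>q. q tagged_partial_division_of {a..b} \<Longrightarrow>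
        (\<Sum>(x,K)\<in>q. Sup K - Inf K) < \<delta> \<Longrightarrow> (\<Sum>(x,K)\<in>q. norm (g (Sup K) - g (Inf K))) < e"
      using abs_cont_on_tagged_variation[OF ac \<open>e > 0\<close>] by blast
    obtain \<gamma> where "gauge \<gamma>" and \<gamma>: "\<And>p. p tagged_division_of {a..b} \<Longrightarrow> \<gamma> fine p \<Longrightarrow>
        (\<Sum>(x,K)\<in>{z\<in>p. fst z \<in> N}. Sup K - Inf K) < \<delta>"
      using negligible_imp_tagged_length_small[OF N \<open>\<delta> > 0\<close>] by blast
    obtain r where "\<And>t. r t > 0" and r: "\<And>t u v. t \<in> {a..b} - N \<Longrightarrow> u \<in> ball t (r t) \<Longrightarrow>
        v \<in> ball t (r t) \<Longrightarrow> u \<le> t \<Longrightarrow> t \<le> v \<Longrightarrow> g v - g u \<le> e * (v - u)"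
      using nonpos_derivative_straddle_gauge[OF der \<open>e > 0\<close>] by blast
    have "gauge (\<lambda>t. \<gamma> t \<inter> ball t (r t))"
      using \<open>gauge \<gamma>\<close> \<open>\<And>t. r t > 0\<close> by (intro gauge_Int gauge_ball_dependent) auto
    then obtain p where "p tagged_division_of {a..b}" "(\<lambda>t. \<gamma> t \<inter> ball t (r t)) fine p"
      by (rule fine_division_exists_real)
    then have p: "p tagged_division_of {a..b}" "\<gamma> fine p" "(\<lambda>t. ball t (r t)) fine p"
      by (simp_all add: fine_Int)
    define pN where "pN = {z\<in>p. fst z \<in> N}"
    have "p tagged_partial_division_of {a..b}"
      using p(1) by (simp add: tagged_division_of_def)
    then have "pN tagged_partial_division_of {a..b}"
      unfolding pN_def by (rule tagged_partial_division_subset) auto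
    then have "(\<Sum>(x,K)\<in>pN. norm (g (Sup K) - g (Inf K))) < e"
      by (rule \<delta>[OF _ \<gamma>[OF p(1,2), folded pN_def]])
    moreover have "(\<Sum>(x,K)\<in>pN. g (Sup K) - g (Inf K)) \<le> (\<Sum>(x,K)\<in>pN. norm (g (Sup K) - g (Inf K)))"
      by (intro sum_mono) auto
    moreover have "g b - g a = (\<Sum>(x,K)\<in>p - pN. g (Sup K) - g (Inf K)) + (\<Sum>(x,K)\<in>pN. g (Sup K) - g (Inf K))"
      using additive_tagged_division_1[OF \<open>a \<le> b\<close> p(1), of g] p(1)
      by (subst sum.subset_diff[symmetric]) (auto simp: pN_def)
    moreover have "(\<Sum>(x,K)\<in>p - pN. g (Sup K) - g (Inf K)) \<le> e * (b - a)"
    proof -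
      have "p - pN = {z\<in>p. fst z \<notin> N}" by (auto simp: pN_def)
      then show ?thesis
        using tagged_division_increments_le[OF p(1,3) \<open>a \<le> b\<close> _ r] \<open>e > 0\<close> by simp
    qed
    ultimately show ?thesis by linarith
  qed
  show ?thesis
  proof (rule field_le_epsilon)
    fix \<epsilon> :: real assume "\<epsilon> > 0"
    then have "g b - g a \<le> \<epsilon> / (b - a + 1) * (b - a) + \<epsilon> / (b - a + 1)"
      using \<open>a \<le> b\<close> by (intro key) auto
    also have "\<dots> = \<epsilon> / (b - a + 1) * (b - a + 1)"
      by (simp add: distrib_left)
    also have "\<dots> = \<epsilon>"
      using \<open>a \<le> b\<close> by simp
    finally show "g b \<le> g a + \<epsilon>" by simp
  qed
qed

section \<open>The least eigenvalue of a symmetric matrix\<close>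

lemma symmetric_matrix_inner_commute:
  fixes G :: "real^'n^'n"
  assumes "transpose G = G"
  shows "(G *v v) \<bullet> w = v \<bullet> (G *v w)"
  by (metis assms dot_lmul_matrix transpose_matrix_vector)

lemma finite_eigenvalues_symmetric:
  fixes G :: "real^'n^'n"
  assumes "transpose G = G"
  shows "finite {\<mu>. is_eigenvalue G \<mu>}"
proof -
  define S where "S = {\<mu>. is_eigenvalue G \<mu>}"
  define ev where "ev \<mu> = (SOME v. v \<noteq> 0 \<and> G *v v = \<mu> *\<^sub>R v)" for \<mu>
  have ev: "ev \<mu> \<noteq> 0" "G *v ev \<mu> = \<mu> *\<^sub>R ev \<mu>" if "\<mu> \<in> S" for \<mu>
    using someI_ex[of "\<lambda>v. v \<noteq> 0 \<and> G *v v = \<mu> *\<^sub>R v"] that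
    unfolding S_def is_eigenvalue_def ev_def by auto
  have "inj_on ev S"
  proof (rule inj_onI)
    fix \<mu> \<nu> assume "\<mu> \<in> S" "\<nu> \<in> S" "ev \<mu> = ev \<nu>"
    then have "(\<mu> - \<nu>) *\<^sub>R ev \<mu> = 0" using ev by (metis scaleR_left_diff_distrib right_minus_eq)
    then show "\<mu> = \<nu>" using ev(1)[OF \<open>\<mu> \<in> S\<close>] by simp
  qed
  moreover have "pairwise orthogonal (ev ` S)"
  proof (rule pairwiseI, clarify)
    fix \<mu> \<nu> assume "\<mu> \<in> S" "\<nu> \<in> S" "ev \<mu> \<noteq> ev \<nu>"
    have "\<mu> * (ev \<mu> \<bullet> ev \<nu>) = (G *v ev \<mu>) \<bullet> ev \<nu>" using ev(2)[OF \<open>\<mu> \<in> S\<close>] by simp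
    also have "\<dots> = ev \<mu> \<bullet> (G *v ev \<nu>)" by (rule symmetric_matrix_inner_commute[OF assms])
    also have "\<dots> = \<nu> * (ev \<mu> \<bullet> ev \<nu>)" using ev(2)[OF \<open>\<nu> \<in> S\<close>] by simp
    finally show "orthogonal (ev \<mu>) (ev \<nu>)"
      using \<open>ev \<mu> \<noteq> ev \<nu>\<close> by (auto simp: orthogonal_def)
  qed
  moreover have "0 \<notin> ev ` S" using ev(1) by auto
  ultimately have "finite (ev ` S)" "inj_on ev S"
    using pairwise_orthogonal_independent independent_imp_finite by blast+
  then show ?thesis unfolding S_def using finite_imageD by blast
qed

lemma selfadjoint_nonneg_form_eq_0:
  fixes f :: "'a::real_inner \<Rightarrow> 'a"
  assumes lin: "linear f" and adj: "\<And>x y. f x \<bullet> y = x \<bullet> f y"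
    and nonneg: "\<And>w. 0 \<le> w \<bullet> f w" and "v \<bullet> f v = 0"
  shows "f v = 0"
proof -
  define c where "c = f v \<bullet> f v"
  define d where "d = f v \<bullet> f (f v)"
  have "d \<ge> 0" unfolding d_def by (rule nonneg)
  have expand: "(v + s *\<^sub>R f v) \<bullet> f (v + s *\<^sub>R f v) = 2 * s * c + s\<^sup>2 * d" for s
    using \<open>v \<bullet> f v = 0\<close> adj[of v "f v"] linear_add[OF lin] linear_scale[OF lin]
    by (simp add: c_def d_def inner_add_left inner_add_right inner_commute power2_eq_square algebra_simps)
  have line: "0 \<le> 2 * s * c + s\<^sup>2 * d" for s
    using nonneg expand by metis
  define t where "t = d + 1"
  have "t > 0" using \<open>d \<ge> 0\<close> by (simp add: t_def)
  have "0 \<le> (2 * (- c / t) * c + (- c / t)\<^sup>2 * d) * t\<^sup>2"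
    using line[of "- c / t"] by (intro mult_nonneg_nonneg) auto
  also have "\<dots> = c\<^sup>2 * (d - 2 * t)"
    using \<open>t > 0\<close> by (simp add: field_simps power2_eq_square)
  finally have "c\<^sup>2 \<le> 0"
    using \<open>d \<ge> 0\<close> unfolding t_def by (smt (verit) mult_pos_neg zero_less_power2)
  then have "c = 0" by simp
  then show ?thesis unfolding c_def by simp
qed

lemma symmetric_matrix_least_eigenvalue:
  fixes G :: "real^'n^'n"
  assumes sym: "transpose G = G"
  obtains \<mu> where "is_eigenvalue G \<mu>" "\<And>w. \<mu> * (w \<bullet> w) \<le> w \<bullet> (G *v w)"
proof -
  define q where "q w = w \<bullet> (G *v w)" for w :: "real^'n"
  have "continuous_on (sphere 0 1) q"
    unfolding q_def by (intro continuous_intros linear_continuous_on matrix_vector_mul_linear)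
  moreover have "sphere (0::real^'n) 1 \<noteq> {}" by simp
  ultimately obtain v0 where v0: "v0 \<in> sphere 0 1" and min: "\<And>w. w \<in> sphere 0 1 \<Longrightarrow> q v0 \<le> q w"
    using continuous_attains_inf[OF compact_sphere] by blast
  define \<mu> where "\<mu> = q v0"
  have bound: "\<mu> * (w \<bullet> w) \<le> q w" for w
  proof (cases "w = 0")
    case False
    then have "\<mu> \<le> q ((1 / norm w) *\<^sub>R w)"
      unfolding \<mu>_def by (intro min) simp
    also have "\<dots> = q w / (norm w)\<^sup>2"
      by (simp add: q_def matrix_vector_mult_scaleR power2_eq_square)
    finally show ?thesis
      using False by (simp add: pos_le_divide_eq power2_norm_eq_inner)
  qed (simp add: q_def)
  have "v0 \<bullet> v0 = 1" using v0 by (simp add: power2_norm_eq_inner[symmetric])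
  have "G *v v0 - \<mu> *\<^sub>R v0 = 0"
  proof (rule selfadjoint_nonneg_form_eq_0[where f = "\<lambda>w. G *v w - \<mu> *\<^sub>R w"])
    show "linear (\<lambda>w. G *v w - \<mu> *\<^sub>R w)"
      by (auto intro!: linearI simp: matrix_vector_right_distrib algebra_simps matrix_vector_mult_scaleR)
    show "(G *v x - \<mu> *\<^sub>R x) \<bullet> y = x \<bullet> (G *v y - \<mu> *\<^sub>R y)" for x y
      using symmetric_matrix_inner_commute[OF sym] by (simp add: inner_diff_left inner_diff_right)
    show "0 \<le> w \<bullet> (G *v w - \<mu> *\<^sub>R w)" for w
      using bound[of w] by (simp add: q_def inner_diff_right)
    show "v0 \<bullet> (G *v v0 - \<mu> *\<^sub>R v0) = 0"
      using \<open>v0 \<bullet> v0 = 1\<close> by (simp add: \<mu>_def q_def inner_diff_right)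
  qed
  then have "is_eigenvalue G \<mu>"
    unfolding is_eigenvalue_def using v0 by (intro exI[of _ v0]) auto
  with bound show ?thesis using that unfolding q_def by blast
qed

lemma lambda_min_le_quadratic_form:
  fixes G :: "real^'n^'n"
  assumes "transpose G = G"
  shows "lambda_min G * (v \<bullet> v) \<le> v \<bullet> (G *v v)"
proof -
  obtain \<mu> where "is_eigenvalue G \<mu>" and \<mu>: "\<mu> * (v \<bullet> v) \<le> v \<bullet> (G *v v)"
    using symmetric_matrix_least_eigenvalue[OF assms] by metis
  then have "lambda_min G \<le> \<mu>"
    unfolding lambda_min_def using finite_eigenvalues_symmetric[OF assms] by simp
  then show ?thesis
    using \<mu> by (meson inner_ge_zero mult_right_mono order_trans)
qed

section \<open>The loss along the gradient flow\<close>

definition neuron_residual :: "(real \<Rightarrow> real) \<Rightarrow> ('x \<Rightarrow> real^'D) \<Rightarrow> real^'m \<Rightarrow> ('n \<Rightarrow> 'x) \<Rightarrow> real^'n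
    \<Rightarrow> real^'D^'m \<Rightarrow> 'm \<Rightarrow> real^'n" where
  "neuron_residual \<sigma> Phi c xs y W i =
     (\<chi> a. (nn_f \<sigma> Phi c W (xs a) - y$a) * deriv \<sigma> (nn_h Phi W i (xs a)))"

lemma bounded_linear_nn_h: "bounded_linear (\<lambda>W. nn_h Phi W i x)"
  unfolding nn_h_def
  by (intro bounded_linear_intros bounded_linear_compose[OF bounded_linear_vec_nth bounded_linear_vec_nth])

lemma has_real_derivative_nn_h:
  assumes "(W has_vector_derivative V) (at t)"
  shows "((\<lambda>s. nn_h Phi (W s) i x) has_real_derivative nn_h Phi V i x) (at t)"
  using bounded_linear.has_vector_derivative[OF bounded_linear_nn_h assms]
  by (simp add: has_real_derivative_iff_has_vector_derivative)

lemma has_real_derivative_nn_loss: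
  fixes W :: "real \<Rightarrow> real^'D::finite^'m::finite" and xs :: "'n::finite \<Rightarrow> 'x"
  assumes W: "(W has_vector_derivative V) (at t)" and \<sigma>: "\<And>u. \<sigma> differentiable (at u)"
  shows "((\<lambda>s. nn_loss \<sigma> Phi c xs y (W s)) has_real_derivative
      (\<Sum>a\<in>UNIV. (nn_f \<sigma> Phi c (W t) (xs a) - y$a) * (1 / real CARD('m) *
        (\<Sum>i\<in>UNIV. c$i * (deriv \<sigma> (nn_h Phi (W t) i (xs a)) * nn_h Phi V i (xs a)))))) (at t)"
proof -
  have "(\<sigma> has_real_derivative deriv \<sigma> u) (at u)" for u
    using \<sigma> by (simp add: DERIV_deriv_iff_real_differentiable)
  then have f: "((\<lambda>s. nn_f \<sigma> Phi c (W s) x) has_real_derivative 1 / real CARD('m) *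
      (\<Sum>i\<in>UNIV. c$i * (deriv \<sigma> (nn_h Phi (W t) i x) * nn_h Phi V i x))) (at t)" for x
    unfolding nn_f_def
    by (intro DERIV_cmult DERIV_sum DERIV_chain'[OF has_real_derivative_nn_h[OF W]])
  show ?thesis
    unfolding nn_loss_def
    by (rule DERIV_cong[OF DERIV_cmult[OF DERIV_sum[OF DERIV_power[OF DERIV_diff[OF f DERIV_const], where n=2]]]])
      (simp add: sum_distrib_left sum_distrib_right mult_ac)
qed

lemma nn_h_gf_rhs:
  fixes Phi :: "'x \<Rightarrow> real^'D::finite" and xs :: "'n::finite \<Rightarrow> 'x"
  shows "nn_h Phi (gf_rhs \<sigma> Phi c xs y W) i (xs a) =
     - c$i * (gram Phi xs *v neuron_residual \<sigma> Phi c xs y W i) $ a"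
proof -
  define D where "D = real CARD('D)"
  define P where "P b j = Phi (xs b) $ j" for b j
  define v where "v = neuron_residual \<sigma> Phi c xs y W i"
  have "sqrt D * sqrt D = D" by (simp add: D_def)
  then have "nn_h Phi (gf_rhs \<sigma> Phi c xs y W) i (xs a) =
      - c$i / D * (\<Sum>j\<in>UNIV. \<Sum>b\<in>UNIV. v$b * P b j * P a j)"
    unfolding nn_h_def gf_rhs_def neuron_residual_def v_def D_def P_def
    by (simp add: sum_distrib_left sum_distrib_right mult_ac)
  also have "\<dots> = - c$i / D * (\<Sum>b\<in>UNIV. \<Sum>j\<in>UNIV. v$b * P b j * P a j)"
    by (subst sum.swap) (rule refl)
  also have "\<dots> = - c$i * (gram Phi xs *v v) $ a"
    unfolding gram_def matrix_vector_mult_def inner_vec_def D_def P_def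
    by (simp add: sum_distrib_left sum_distrib_right mult_ac)
  finally show ?thesis unfolding v_def .
qed

lemma symmetric_gram: "transpose (gram Phi xs) = gram Phi xs"
  unfolding gram_def transpose_def by (simp add: inner_commute)

lemma inner_neuron_residual_ge:
  assumes "K \<ge> 0" "\<forall>u. \<bar>deriv \<sigma> u\<bar> \<ge> K"
  shows "K\<^sup>2 * (2 * nn_loss \<sigma> Phi c xs y W) \<le> neuron_residual \<sigma> Phi c xs y W i \<bullet> neuron_residual \<sigma> Phi c xs y W i"
proof -
  have "K\<^sup>2 \<le> (deriv \<sigma> u)\<^sup>2" for u
    using assms by (metis abs_le_square_iff abs_of_nonneg)
  then have "(\<Sum>a\<in>UNIV. K\<^sup>2 * (nn_f \<sigma> Phi c W (xs a) - y$a)\<^sup>2) \<le>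
      (\<Sum>a\<in>UNIV. (deriv \<sigma> (nn_h Phi W i (xs a)))\<^sup>2 * (nn_f \<sigma> Phi c W (xs a) - y$a)\<^sup>2)"
    by (intro sum_mono mult_right_mono) auto
  then show ?thesis
    unfolding nn_loss_def neuron_residual_def inner_vec_def
    by (simp add: sum_distrib_left power2_eq_square mult_ac)
qed

lemma gf_loss_derivative_le:
  fixes Phi :: "'x \<Rightarrow> real^'D::finite" and xs :: "'n::finite \<Rightarrow> 'x" and c :: "real^'m::finite"
  assumes "lambda_min (gram Phi xs) \<ge> 0" and "\<forall>i. \<bar>c$i\<bar> = chat"
    and "K \<ge> 0" and "\<forall>u. \<bar>deriv \<sigma> u\<bar> \<ge> K"
  shows "(\<Sum>a\<in>UNIV. (nn_f \<sigma> Phi c W (xs a) - y$a) * (1 / real CARD('m) *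
      (\<Sum>i\<in>UNIV. c$i * (deriv \<sigma> (nn_h Phi W i (xs a)) * nn_h Phi (gf_rhs \<sigma> Phi c xs y W) i (xs a)))))
    \<le> - 2 * chat\<^sup>2 * lambda_min (gram Phi xs) * K\<^sup>2 * nn_loss \<sigma> Phi c xs y W"
proof -
  define G where "G = gram Phi xs"
  define m where "m = real CARD('m)"
  define v where "v = neuron_residual \<sigma> Phi c xs y W"
  define L where "L = nn_loss \<sigma> Phi c xs y W"
  have "(\<Sum>a\<in>UNIV. (nn_f \<sigma> Phi c W (xs a) - y$a) * (1 / m *
      (\<Sum>i\<in>UNIV. c$i * (deriv \<sigma> (nn_h Phi W i (xs a)) * nn_h Phi (gf_rhs \<sigma> Phi c xs y W) i (xs a)))))
    = 1 / m * (\<Sum>a\<in>UNIV. \<Sum>i\<in>UNIV. - (c$i)\<^sup>2 * (v i $ a * (G *v v i) $ a))"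
    unfolding nn_h_gf_rhs sum_distrib_left
    by (intro sum.cong refl) (simp add: G_def v_def neuron_residual_def power2_eq_square mult_ac)
  also have "\<dots> = - (1 / m) * (\<Sum>i\<in>UNIV. (c$i)\<^sup>2 * (v i \<bullet> (G *v v i)))"
    by (subst sum.swap) (simp add: inner_vec_def sum_distrib_left sum_negf)
  also have "\<dots> \<le> - (1 / m) * (\<Sum>i\<in>(UNIV::'m set). chat\<^sup>2 * (lambda_min G * (K\<^sup>2 * (2 * L))))"
  proof -
    have "chat\<^sup>2 * (lambda_min G * (K\<^sup>2 * (2 * L))) \<le> (c$i)\<^sup>2 * (v i \<bullet> (G *v v i))" for i
    proof -
      have "lambda_min G * (K\<^sup>2 * (2 * L)) \<le> lambda_min G * (v i \<bullet> v i)"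
        using inner_neuron_residual_ge[OF assms(3,4)] assms(1)
        unfolding G_def L_def v_def by (intro mult_left_mono) auto
      also have "\<dots> \<le> v i \<bullet> (G *v v i)"
        unfolding G_def by (rule lambda_min_le_quadratic_form[OF symmetric_gram])
      finally show ?thesis
        using assms(2) by (metis power2_abs mult_left_mono zero_le_power2)
    qed
    then show ?thesis
      by (intro mult_left_mono_neg sum_mono) (auto simp: m_def)
  qed
  also have "\<dots> = - 2 * chat\<^sup>2 * lambda_min G * K\<^sup>2 * L"
    by (simp add: m_def)
  finally show ?thesis unfolding G_def L_def m_def .
qed

lemma abs_cont_on_nn_loss:
  fixes W :: "real \<Rightarrow> real^'D::finite^'m::finite" and xs :: "'n::finite \<Rightarrow> 'x"
  assumes W: "abs_cont_on a b W" and \<sigma>: "L-lipschitz_on UNIV \<sigma>"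
  shows "abs_cont_on a b (\<lambda>t. nn_loss \<sigma> Phi c xs y (W t))"
proof -
  have h: "abs_cont_on a b (\<lambda>t. nn_h Phi (W t) i x)" for i x
  proof -
    obtain B where "B-lipschitz_on (W ` {a..b}) (\<lambda>W. nn_h Phi W i x)"
      by (rule bounded_linear.lipschitz_boundE[OF bounded_linear_nn_h])
    then show ?thesis by (rule abs_cont_on_compose_lipschitz[OF W])
  qed
  have "abs_cont_on a b (\<lambda>t. \<sigma> (nn_h Phi (W t) i x))" for i x
    by (rule abs_cont_on_compose_lipschitz[OF h lipschitz_on_subset[OF \<sigma> subset_UNIV]])
  then have "abs_cont_on a b (\<lambda>t. nn_f \<sigma> Phi c (W t) x)" for x
    unfolding nn_f_def by (intro abs_cont_on_cmult abs_cont_on_sum)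
  then have "abs_cont_on a b (\<lambda>t. nn_f \<sigma> Phi c (W t) x - k)" for x k
    by (rule abs_cont_on_compose_lipschitz[OF _ lipschitz_on_diff[OF lipschitz_on_id lipschitz_on_constant]])
  then show ?thesis
    unfolding nn_loss_def power2_eq_square
    by (intro abs_cont_on_cmult abs_cont_on_sum abs_cont_on_mult)
qed

lemma AE_lborel_negligible_exception:
  assumes "AE t in lborel. P t"
  obtains N where "negligible N" "\<And>t. t \<notin> N \<Longrightarrow> P t"
proof -
  from assms obtain N where N: "{t \<in> space lborel. \<not> P t} \<subseteq> N" "emeasure lborel N = 0" "N \<in> sets lborel"
    by (rule AE_E)
  then have "N \<in> null_sets lborel" by (simp add: null_sets_def)
  then have "negligible N"
    unfolding negligible_iff_null_sets by (rule null_sets_completionI)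
  with N(1) show ?thesis using that by auto
qed

lemma gradient_flow_solution_derivative_ae:
  assumes "gradient_flow_solution \<sigma> Phi c xs y W"
  obtains N where "negligible N"
    "\<And>t. 0 \<le> t \<Longrightarrow> t \<notin> N \<Longrightarrow> (W has_vector_derivative gf_rhs \<sigma> Phi c xs y (W t)) (at t)"
proof -
  have "AE t in lborel. 0 \<le> t \<longrightarrow> (W has_vector_derivative gf_rhs \<sigma> Phi c xs y (W t)) (at t)"
    using assms unfolding gradient_flow_solution_def by blast
  then obtain N where "negligible N"
    "\<And>t. t \<notin> N \<Longrightarrow> 0 \<le> t \<longrightarrow> (W has_vector_derivative gf_rhs \<sigma> Phi c xs y (W t)) (at t)"
    using AE_lborel_negligible_exception by blast
  then show ?thesis using that by blast
qed

lemma has_real_derivative_exp_weighted_nonpos: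
  assumes "(f has_real_derivative D) (at t)" "D \<le> - k * f t"
  shows "\<exists>D'. ((\<lambda>s. f s * exp (k * s)) has_real_derivative D') (at t) \<and> D' \<le> 0"
proof -
  have "((\<lambda>s. exp (k * s)) has_real_derivative exp (k * t) * k) (at t)"
    using DERIV_fun_exp[OF DERIV_cmult[OF DERIV_ident, of k]] by simp
  then have "((\<lambda>s. f s * exp (k * s)) has_real_derivative D * exp (k * t) + exp (k * t) * k * f t) (at t)"
    by (rule DERIV_mult[OF assms(1)])
  moreover have "D * exp (k * t) + exp (k * t) * k * f t \<le> 0"
    using mult_right_mono[OF assms(2), of "exp (k * t)"] by (simp add: algebra_simps)
  ultimately show ?thesis by blast
qed

lemma gradient_flow_loss_derivative:
  fixes W :: "real \<Rightarrow> real^'D::finite^'m::finite" and xs :: "'n::finite \<Rightarrow> 'x" and c :: "real^'m"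
  assumes "(W has_vector_derivative gf_rhs \<sigma> Phi c xs y (W t)) (at t)"
    and "\<forall>u. \<sigma> differentiable (at u)" and "lambda_min (gram Phi xs) \<ge> 0" and "\<forall>i. \<bar>c$i\<bar> = chat"
    and "K \<ge> 0" and "\<forall>u. \<bar>deriv \<sigma> u\<bar> \<ge> K"
  obtains D where "((\<lambda>s. nn_loss \<sigma> Phi c xs y (W s)) has_real_derivative D) (at t)"
    "D \<le> - 2 * chat\<^sup>2 * lambda_min (gram Phi xs) * K\<^sup>2 * nn_loss \<sigma> Phi c xs y (W t)"
proof (rule that)
  show "((\<lambda>s. nn_loss \<sigma> Phi c xs y (W s)) has_real_derivative
      (\<Sum>a\<in>UNIV. (nn_f \<sigma> Phi c (W t) (xs a) - y$a) * (1 / real CARD('m) *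
        (\<Sum>i\<in>UNIV. c$i * (deriv \<sigma> (nn_h Phi (W t) i (xs a)) *
          nn_h Phi (gf_rhs \<sigma> Phi c xs y (W t)) i (xs a)))))) (at t)"
    using assms(2) by (intro has_real_derivative_nn_loss[OF assms(1)]) auto
qed (rule gf_loss_derivative_le[OF assms(3-6)])

theorem mainTheorem5:
  fixes \<Omega> :: "(real^'d) set"
    and xs :: "'n::finite \<Rightarrow> real^'d::finite"
    and y :: "real^'n"
    and Phi :: "real^'d \<Rightarrow> real^'D::finite"
    and \<sigma> :: "real \<Rightarrow> real"
    and c :: "real^'m::finite"
    and chat K :: real
    and W :: "real \<Rightarrow> real^'D^'m"
  assumes "\<forall>a. xs a \<in> \<Omega>"
    and "lambda_min (gram Phi xs) > 0"
    and "chat > 0" and "\<forall>i. \<bar>c$i\<bar> = chat"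
    and "\<exists>L. L-lipschitz_on UNIV \<sigma>"
    and "\<forall>u. \<sigma> differentiable (at u)"
    and "K > 0" and "\<forall>u. \<bar>deriv \<sigma> u\<bar> \<ge> K"
    and "gradient_flow_solution \<sigma> Phi c xs y W"
  shows "\<forall>t\<ge>0. nn_loss \<sigma> Phi c xs y (W t)
           \<le> nn_loss \<sigma> Phi c xs y (W 0) * exp (- 2 * chat^2 * lambda_min (gram Phi xs) * K^2 * t)"
proof (intro allI impI)
  fix T :: real assume "T \<ge> 0"
  define \<kappa> where "\<kappa> = 2 * chat^2 * lambda_min (gram Phi xs) * K^2"
  define loss where "loss t = nn_loss \<sigma> Phi c xs y (W t)" for t
  obtain L where "L-lipschitz_on UNIV \<sigma>" using assms(5) by blast
  have "lambda_min (gram Phi xs) \<ge> 0" "K \<ge> 0" using assms(2,7) by simp_all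
  have W_ac: "abs_cont_on 0 T W"
    using assms(9) \<open>T \<ge> 0\<close> unfolding gradient_flow_solution_def by auto
  obtain N where "negligible N" and
    W': "\<And>t. 0 \<le> t \<Longrightarrow> t \<notin> N \<Longrightarrow> (W has_vector_derivative gf_rhs \<sigma> Phi c xs y (W t)) (at t)"
    using gradient_flow_solution_derivative_ae[OF assms(9)] by blast
  have "loss T * exp (\<kappa> * T) \<le> loss 0 * exp (\<kappa> * 0)"
  proof (rule abs_cont_on_derivative_nonpos_imp_le[OF _ \<open>T \<ge> 0\<close> \<open>negligible N\<close>])
    show "abs_cont_on 0 T (\<lambda>t. loss t * exp (\<kappa> * t))"
      unfolding loss_def
      by (intro abs_cont_on_mult abs_cont_on_exp_linear abs_cont_on_nn_loss[OF W_ac \<open>L-lipschitz_on UNIV \<sigma>\<close>])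
    fix t assume "t \<in> {0..T} - N"
    then have "(W has_vector_derivative gf_rhs \<sigma> Phi c xs y (W t)) (at t)" using W' by auto
    then obtain D where D: "(loss has_real_derivative D) (at t)"
      "D \<le> - 2 * chat\<^sup>2 * lambda_min (gram Phi xs) * K\<^sup>2 * loss t"
      unfolding loss_def
      by (rule gradient_flow_loss_derivative[OF _ assms(6) \<open>lambda_min (gram Phi xs) \<ge> 0\<close> assms(4) \<open>K \<ge> 0\<close> assms(8)])
    from D(2) have "D \<le> - \<kappa> * loss t" by (simp add: \<kappa>_def)
    with D(1) show "\<exists>D. ((\<lambda>t. loss t * exp (\<kappa> * t)) has_real_derivative D) (at t) \<and> D \<le> 0"
      by (rule has_real_derivative_exp_weighted_nonpos)
  qed
  then have "loss T \<le> loss 0 / exp (\<kappa> * T)"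
    by (simp add: pos_le_divide_eq)
  then show "nn_loss \<sigma> Phi c xs y (W T)
      \<le> nn_loss \<sigma> Phi c xs y (W 0) * exp (- 2 * chat^2 * lambda_min (gram Phi xs) * K^2 * T)"
    by (simp add: loss_def \<kappa>_def exp_minus divide_inverse)
qed

end
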